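(* Let $\{\varphi_n\}_{n\ge1}$ be an orthonormal system on $[0,1]$ and let $\{d_n\}$ be a sequence of real numbers with $d_n=O\!\left(\frac{\sqrt{n}}{\log^2(n+1)}\right)$. For a real sequence $a=\{a_n\}\in \ell_2$ put $$Q_n(d,a,x)=\sum_{k=1}^{n} d_k a_k \log k\,\varphi_k(x),\qquad U_n(f)=\int_0^1 f(x)Q_n(d,a,x)\,dx,\qquad B_n(d,a)=\max_{1\le i<n}\left|\int_0^{i/n}Q_n(d,a,x)\,dx\right|.$$ Suppose that for every $a\in\ell_2$ we have $B_n(d,a)=O(1)$ as $n\to\infty$. Then for every function $f\in BV$ and every $a\in \ell_2$, the sequence $\{U_n(f)\}$ is bounded, i.e. $\limsup_{n\to\infty}|U_n(f)|<+\infty$.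
   Context: $BV$ denotes the class of (finite-valued) functions of bounded variation on $[0,1]$. An orthonormal system (ONS) on $[0,1]$ is a sequence of functions in $L_2(0,1)$ that is orthonormal in $L_2(0,1)$. $\log$ denotes the logarithm (so $\log 1=0$). The sequence of functionals $\{U_n\}$ is called bounded on a function space $V$ if for every $a\in\ell_2$ one has $\limsup_{n\to\infty}|U_n(f)|<+\infty$. *)

theory Defs
  imports "HOL-Analysis.Analysis" "HOL-Library.Landau_Symbols"
begin

definition BV01 :: "(real \<Rightarrow> real) \<Rightarrow> bool" where
  "BV01 f \<longleftrightarrow> (\<exists>V. \<forall>xs. sorted xs \<and> set xs \<subseteq> {0..1} \<longrightarrow>
      (\<Sum>i<length xs - 1. \<bar>f (xs ! Suc i) - f (xs ! i)\<bar>) \<le> V)"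

definition ONS01 :: "(nat \<Rightarrow> real \<Rightarrow> real) \<Rightarrow> bool" where
  "ONS01 \<phi> \<longleftrightarrow>
     (\<forall>n\<ge>1. \<phi> n \<in> borel_measurable lborel \<and>
              set_integrable lborel {0..1} (\<lambda>x. (\<phi> n x)\<^sup>2)) \<and>
     (\<forall>n\<ge>1. \<forall>m\<ge>1. (LINT x:{0..1}|lborel. \<phi> n x * \<phi> m x) = (if n = m then 1 else 0))"

definition ell2 :: "(nat \<Rightarrow> real) set" where
  "ell2 = {a. summable (\<lambda>n. (a n)\<^sup>2)}"

definition Qfun :: "(nat \<Rightarrow> real \<Rightarrow> real) \<Rightarrow> (nat \<Rightarrow> real) \<Rightarrow> (nat \<Rightarrow> real) \<Rightarrow> nat \<Rightarrow> real \<Rightarrow> real" where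
  "Qfun \<phi> d a n x = (\<Sum>k=1..n. d k * a k * ln (real k) * \<phi> k x)"

definition Ufun :: "(nat \<Rightarrow> real \<Rightarrow> real) \<Rightarrow> (nat \<Rightarrow> real) \<Rightarrow> (nat \<Rightarrow> real) \<Rightarrow> nat \<Rightarrow> (real \<Rightarrow> real) \<Rightarrow> real" where
  "Ufun \<phi> d a n f = (LINT x:{0..1}|lborel. f x * Qfun \<phi> d a n x)"

text \<open>B_n; for n = 1 the maximum is over an empty set, and we set it to 0 (irrelevant for O(1)).\<close>
definition Bfun :: "(nat \<Rightarrow> real \<Rightarrow> real) \<Rightarrow> (nat \<Rightarrow> real) \<Rightarrow> (nat \<Rightarrow> real) \<Rightarrow> nat \<Rightarrow> real" where
  "Bfun \<phi> d a n = (if n \<ge> 2 then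
      Max ((\<lambda>i. \<bar>LINT x:{0..real i / real n}|lborel. Qfun \<phi> d a n x\<bar>) ` {1..<n}) else 0)"

end

theory Submission
  imports Defs "HOL-Real_Asymp.Real_Asymp"
begin

(* Cut [0,1] into the cells (i/n, (i+1)/n], i < n. By orthonormality
   ||Q_n||_2^2 = sum_k (d_k a_k log k)^2 = O(n), since d_k log k = O(sqrt k) and a is in l_2;
   so by Cauchy-Schwarz the integral of |Q_n| over each cell is O(1). Replacing f on each cell
   by its value at the right endpoint therefore changes U_n(f) by O(Var f). Summation by parts
   turns the remaining sum of f((i+1)/n) times the cell integrals of Q_n into f(1) times the
   integral of Q_n over [0,1] minus the prefix integrals of Q_n over [0, i/n] weighted by the
   increments of f. The prefix integrals are bounded by B_n = O(1), and so is the full integral,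
   being the last prefix integral plus one cell. *)

section \<open>Total variation\<close>

definition variation_sum :: "(real \<Rightarrow> real) \<Rightarrow> real list \<Rightarrow> real" where
  "variation_sum f xs = (\<Sum>i<length xs - 1. \<bar>f (xs ! Suc i) - f (xs ! i)\<bar>)"

definition variation :: "(real \<Rightarrow> real) \<Rightarrow> real \<Rightarrow> real" where
  "variation f t = Sup (variation_sum f ` {xs. sorted xs \<and> set xs \<subseteq> {0..t}})"

lemma variation_sum_snoc:
  "variation_sum f (xs @ [z]) = variation_sum f xs + (if xs = [] then 0 else \<bar>f z - f (last xs)\<bar>)"
proof (cases xs rule: rev_cases)
  case Nil
  then show ?thesis by (simp add: variation_sum_def)
next
  case (snoc ys y)
  have "variation_sum f (xs @ [z]) =
      (\<Sum>i<length ys. \<bar>f ((xs @ [z]) ! Suc i) - f ((xs @ [z]) ! i)\<bar>) + \<bar>f z - f y\<bar>"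
    by (simp add: variation_sum_def snoc nth_append)
  also have "(\<Sum>i<length ys. \<bar>f ((xs @ [z]) ! Suc i) - f ((xs @ [z]) ! i)\<bar>) = variation_sum f xs"
    unfolding variation_sum_def by (rule sum.cong) (auto simp: snoc nth_append)
  finally show ?thesis by (simp add: snoc)
qed

lemma BV01_imp_bdd_above_variation_sum:
  assumes "BV01 f" "t \<le> 1"
  shows "bdd_above (variation_sum f ` {xs. sorted xs \<and> set xs \<subseteq> {0..t}})"
proof -
  obtain V where "\<And>xs. sorted xs \<Longrightarrow> set xs \<subseteq> {0..1} \<Longrightarrow> variation_sum f xs \<le> V"
    using assms(1) unfolding BV01_def variation_sum_def by blast
  then show ?thesis
    using assms(2) by (intro bdd_aboveI[of _ V]) force
qed

lemma variation_add_jump_le: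
  assumes "BV01 f" "0 \<le> x" "x \<le> y" "y \<le> 1"
  shows "variation f x + \<bar>f y - f x\<bar> \<le> variation f y"
proof -
  have "variation f x \<le> variation f y - \<bar>f y - f x\<bar>"
    unfolding variation_def[of f x]
  proof (rule cSUP_least)
    fix xs assume xs: "xs \<in> {xs. sorted xs \<and> set xs \<subseteq> {0..x}}"
    then have "xs @ [x, y] \<in> {xs. sorted xs \<and> set xs \<subseteq> {0..y}}"
      using assms by (force simp: sorted_append)
    then have "variation_sum f (xs @ [x, y]) \<le> variation f y"
      unfolding variation_def
      by (rule cSUP_upper[OF _ BV01_imp_bdd_above_variation_sum[OF assms(1,4)]])
    moreover have "variation_sum f xs + \<bar>f y - f x\<bar> \<le> variation_sum f (xs @ [x, y])"
      using variation_sum_snoc[of f "xs @ [x]" y] variation_sum_snoc[of f xs x] by simp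
    ultimately show "variation_sum f xs \<le> variation f y - \<bar>f y - f x\<bar>"
      by simp
  qed (auto intro: exI[of _ "[]"])
  then show ?thesis by simp
qed

section \<open>Integrals over a partition of the unit interval\<close>

lemma two_abs_mult_le_sum_squares: "2 * \<bar>p * q\<bar> \<le> p\<^sup>2 + q\<^sup>2" for p q :: real
  using sum_squares_bound[of "\<bar>p\<bar>" "\<bar>q\<bar>"] by (simp add: abs_mult mult.assoc)

lemma sum_by_parts:
  fixes g F :: "nat \<Rightarrow> 'a::comm_ring"
  shows "(\<Sum>i<Suc p. g i * (F (Suc i) - F i))
      = g p * F (Suc p) - g 0 * F 0 - (\<Sum>i<p. F (Suc i) * (g (Suc i) - g i))"
  by (induction p) (simp_all add: algebra_simps)

lemma set_integrable_sum:
  fixes f :: "'i \<Rightarrow> 'a \<Rightarrow> real"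
  assumes "\<And>i. i \<in> I \<Longrightarrow> set_integrable M A (f i)"
  shows "set_integrable M A (\<lambda>x. \<Sum>i\<in>I. f i x)"
    and "(LINT x:A|M. (\<Sum>i\<in>I. f i x)) = (\<Sum>i\<in>I. LINT x:A|M. f i x)"
proof -
  have "integrable M (\<lambda>x. \<Sum>i\<in>I. indicator A x * f i x)"
    using assms unfolding set_integrable_def by (intro Bochner_Integration.integrable_sum) simp
  then show "set_integrable M A (\<lambda>x. \<Sum>i\<in>I. f i x)"
    unfolding set_integrable_def by (simp add: sum_distrib_left)
  show "(LINT x:A|M. (\<Sum>i\<in>I. f i x)) = (\<Sum>i\<in>I. LINT x:A|M. f i x)"
    using assms unfolding set_integrable_def set_lebesgue_integral_def
    by (simp add: sum_distrib_left Bochner_Integration.integral_sum)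
qed

lemma set_integrable_of_square:
  fixes f :: "'a \<Rightarrow> real"
  assumes "A \<in> sets M" "emeasure M A < \<infinity>" "f \<in> borel_measurable M"
    and "set_integrable M A (\<lambda>x. (f x)\<^sup>2)"
  shows "set_integrable M A f"
proof (rule set_integrable_bound)
  show "set_integrable M A (\<lambda>x. 1 + (f x)\<^sup>2)"
    using assms unfolding set_integrable_def by (simp add: distrib_left)
  show "set_borel_measurable M A f"
    using assms(1,3) by (simp add: set_borel_measurable_def)
  have "\<bar>q\<bar> \<le> 1 + q\<^sup>2" for q :: real
    using two_abs_mult_le_sum_squares[of 1 q] by simp
  then show "AE x in M. x \<in> A \<longrightarrow> norm (f x) \<le> norm (1 + (f x)\<^sup>2)"
    by simp
qed

lemma set_integrable_mult_of_squares:
  fixes f g :: "'a \<Rightarrow> real"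
  assumes "A \<in> sets M" "f \<in> borel_measurable M" "g \<in> borel_measurable M"
    and "set_integrable M A (\<lambda>x. (f x)\<^sup>2)" "set_integrable M A (\<lambda>x. (g x)\<^sup>2)"
  shows "set_integrable M A (\<lambda>x. f x * g x)"
proof (rule set_integrable_bound)
  show "set_integrable M A (\<lambda>x. (f x)\<^sup>2 + (g x)\<^sup>2)"
    using assms(4,5) by (rule set_integral_add)
  show "set_borel_measurable M A (\<lambda>x. f x * g x)"
    using assms(1-3) by (simp add: set_borel_measurable_def)
  have "\<bar>p * q\<bar> \<le> p\<^sup>2 + q\<^sup>2" for p q :: real
    using two_abs_mult_le_sum_squares[of p q] by simp
  then show "AE x in M. x \<in> A \<longrightarrow> norm (f x * g x) \<le> norm ((f x)\<^sup>2 + (g x)\<^sup>2)"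
    by simp
qed

lemma set_integral_abs_le_sqrt:
  fixes g Q :: "'a \<Rightarrow> real"
  assumes sets: "A \<in> sets M" "S \<in> sets M" "A \<subseteq> S" and finite: "emeasure M A < \<infinity>"
    and g: "set_integrable M A g" and Q: "set_integrable M S (\<lambda>x. (Q x)\<^sup>2)"
    and dom: "\<And>x. x \<in> A \<Longrightarrow> \<bar>g x\<bar> \<le> w * \<bar>Q x\<bar>" and w: "0 \<le> w"
    and s: "(LINT x:S|M. (Q x)\<^sup>2) \<le> s" "0 < s" and m: "measure M A \<le> m" "0 < m"
  shows "\<bar>LINT x:A|M. g x\<bar> \<le> w * sqrt (m * s)"
proof -
  \<comment> \<open>Cauchy-Schwarz in disguise: integrate am_gm, with l balancing its two terms.\<close>
  define l where "l = sqrt s / sqrt m"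
  have l: "0 < l" "s / l = sqrt (m * s)" "l * m = sqrt (m * s)"
    using s(2) m(2) by (simp_all add: l_def real_sqrt_mult field_simps)
  have am_gm: "\<bar>q\<bar> \<le> (q\<^sup>2 / l + l) / 2" for q
    using two_abs_mult_le_sum_squares[of "q / sqrt l" "sqrt l"] l(1)
    by (simp add: abs_mult power_divide)
  have QA: "set_integrable M A (\<lambda>x. (Q x)\<^sup>2)"
    using Q sets(1,3) by (rule set_integrable_subset)
  have const: "set_integrable M A (\<lambda>_. c)" for c :: real
    using sets(1) finite unfolding set_integrable_def by simp
  have "(LINT x:A|M. (Q x)\<^sup>2) \<le> (LINT x:S|M. (Q x)\<^sup>2)"
    using QA Q sets(3) unfolding set_lebesgue_integral_def set_integrable_def
    by (intro integral_mono) (auto split: split_indicator)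
  then have QA_le: "(LINT x:A|M. (Q x)\<^sup>2) \<le> s"
    using s(1) by linarith
  have "\<bar>LINT x:A|M. g x\<bar> \<le> (LINT x:A|M. \<bar>g x\<bar>)"
    using set_integral_norm_bound[OF g] by simp
  also have "\<dots> \<le> (LINT x:A|M. w / 2 * ((Q x)\<^sup>2 / l + l))"
  proof (rule set_integral_mono)
    show "set_integrable M A (\<lambda>x. w / 2 * ((Q x)\<^sup>2 / l + l))"
      using QA const by (intro set_integrable_mult_right set_integral_add set_integrable_divide)
    fix x assume "x \<in> A"
    then show "\<bar>g x\<bar> \<le> w / 2 * ((Q x)\<^sup>2 / l + l)"
      using dom[of x] mult_left_mono[OF am_gm[of "Q x"] w] by simp
  qed (use g set_integrable_abs in blast)
  also have "\<dots> = w / 2 * ((LINT x:A|M. (Q x)\<^sup>2) / l + l * measure M A)"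
    using QA const sets(1) finite by (simp add: set_integral_const mult.commute)
  also have "\<dots> \<le> w / 2 * (s / l + l * m)"
    using QA_le m(1) l(1) w
    by (intro mult_left_mono add_mono divide_right_mono mult_left_mono) auto
  also have "\<dots> = w * sqrt (m * s)"
    using l by simp
  finally show ?thesis .
qed

lemma set_integral_lborel_singleton: "(LINT x:{a}|lborel. h x) = (0::real)"
  for a :: real and h :: "real \<Rightarrow> real"
  unfolding set_lebesgue_integral_def
  by (rule integral_eq_zero_AE) (use AE_lborel_singleton[of a] in \<open>auto elim!: eventually_mono\<close>)

lemma set_integral_Ioc_eq_diff:
  fixes h :: "real \<Rightarrow> real"
  assumes h: "set_integrable lborel {a..c} h" and "a \<le> b" "b \<le> c"
  shows "(LINT x:{b<..c}|lborel. h x) = (LINT x:{a..c}|lborel. h x) - (LINT x:{a..b}|lborel. h x)"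
  unfolding ivl_disj_un_two(8)[OF assms(2,3), symmetric] using assms(2,3)
  by (subst set_integral_Un) (auto intro: set_integrable_subset[OF h])

lemma cell_subset_unit_interval:
  assumes "i < n"
  shows "{real i / real n <.. real (Suc i) / real n} \<subseteq> {0..1}"
proof
  fix x assume "x \<in> {real i / real n <.. real (Suc i) / real n}"
  moreover have "0 \<le> real i / real n" "real (Suc i) / real n \<le> 1"
    using assms by simp_all
  ultimately show "x \<in> {0..1}"
    by (simp only: greaterThanAtMost_iff atLeastAtMost_iff) linarith
qed

lemma set_integral_cell:
  fixes h :: "real \<Rightarrow> real"
  assumes h: "set_integrable lborel {0..1} h" and i: "i < n"
  shows "(LINT x:{real i / real n <.. real (Suc i) / real n}|lborel. h x)
      = (LINT x:{0..real (Suc i) / real n}|lborel. h x) - (LINT x:{0..real i / real n}|lborel. h x)"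
proof (rule set_integral_Ioc_eq_diff)
  show "set_integrable lborel {0..real (Suc i) / real n} h"
    using i by (intro set_integrable_subset[OF h]) (auto simp: field_simps)
qed (simp_all add: divide_right_mono)

lemma set_integral_eq_sum_cells:
  fixes h :: "real \<Rightarrow> real"
  assumes h: "set_integrable lborel {0..1} h" and n: "0 < n"
  shows "(LINT x:{0..1}|lborel. h x) = (\<Sum>i<n. LINT x:{real i / real n <.. real (Suc i) / real n}|lborel. h x)"
proof -
  define P where "P m = (LINT x:{0..real m / real n}|lborel. h x)" for m
  have "(\<Sum>i<n. LINT x:{real i / real n <.. real (Suc i) / real n}|lborel. h x) = (\<Sum>i<n. P (Suc i) - P i)"
    unfolding P_def using set_integral_cell[OF h] by simp
  also have "\<dots> = P n - P 0"
    by (rule sum_lessThan_telescope)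
  also have "\<dots> = (LINT x:{0..1}|lborel. h x)"
    unfolding P_def using n set_integral_lborel_singleton[of 0 h] by simp
  finally show ?thesis ..
qed

lemma set_integral_cell_abs_le:
  fixes g Q :: "real \<Rightarrow> real"
  assumes Q2: "set_integrable lborel {0..1} (\<lambda>x. (Q x)\<^sup>2)"
    and Q2_le: "(LINT x:{0..1}|lborel. (Q x)\<^sup>2) \<le> K * real n" and K: "0 < K" and i: "i < n"
    and g: "set_integrable lborel {real i / real n <.. real (Suc i) / real n} g"
    and dom: "\<And>x. x \<in> {real i / real n <.. real (Suc i) / real n} \<Longrightarrow> \<bar>g x\<bar> \<le> w * \<bar>Q x\<bar>"
    and w: "0 \<le> w"
  shows "\<bar>LINT x:{real i / real n <.. real (Suc i) / real n}|lborel. g x\<bar> \<le> w * sqrt K"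
proof -
  have n: "0 < real n"
    using i by simp
  have "\<bar>LINT x:{real i / real n <.. real (Suc i) / real n}|lborel. g x\<bar> \<le> w * sqrt (1 / real n * (K * real n))"
  proof (rule set_integral_abs_le_sqrt[OF _ _ _ _ g Q2 dom w Q2_le])
    show "{real i / real n <.. real (Suc i) / real n} \<subseteq> {0..1}"
      using i by (rule cell_subset_unit_interval)
    show "measure lborel {real i / real n <.. real (Suc i) / real n} \<le> 1 / real n"
      using n by (subst measure_lborel_Ioc) (simp_all add: divide_right_mono diff_divide_distrib[symmetric])
  qed (use n K in \<open>auto simp: divide_right_mono\<close>)
  then show ?thesis
    using n by simp
qed

lemma set_integral_mult_by_parts:
  fixes f Q :: "real \<Rightarrow> real"
  assumes Q: "set_integrable lborel {0..1} Q" and fQ: "set_integrable lborel {0..1} (\<lambda>x. f x * Q x)"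
    and n: "n = Suc p"
  defines "t \<equiv> \<lambda>i. real i / real n"
    and "P \<equiv> \<lambda>m. LINT x:{0..real m / real n}|lborel. Q x"
  shows "(LINT x:{0..1}|lborel. f x * Q x)
      = (\<Sum>i<n. LINT x:{t i<..t (Suc i)}|lborel. (f x - f (t (Suc i))) * Q x)
        + f 1 * P n - (\<Sum>i<p. P (Suc i) * (f (t (Suc (Suc i))) - f (t (Suc i))))"
proof -
  have cell: "{t i<..t (Suc i)} \<subseteq> {0..1}" if "i < n" for i
    unfolding t_def using that by (rule cell_subset_unit_interval)
  have split_cell: "(LINT x:{t i<..t (Suc i)}|lborel. f x * Q x)
      = (LINT x:{t i<..t (Suc i)}|lborel. (f x - f (t (Suc i))) * Q x) + f (t (Suc i)) * (P (Suc i) - P i)"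
    if "i < n" for i
  proof -
    have "set_integrable lborel {t i<..t (Suc i)} (\<lambda>x. f x * Q x)"
      "set_integrable lborel {t i<..t (Suc i)} Q"
      using cell[OF that] by (auto intro: set_integrable_subset[OF fQ] set_integrable_subset[OF Q])
    then show ?thesis
      using set_integral_cell[OF Q that] unfolding P_def t_def by (simp add: left_diff_distrib)
  qed
  have "(LINT x:{0..1}|lborel. f x * Q x) = (\<Sum>i<n. LINT x:{t i<..t (Suc i)}|lborel. f x * Q x)"
    unfolding t_def by (rule set_integral_eq_sum_cells[OF fQ]) (simp add: n)
  also have "\<dots> = (\<Sum>i<n. LINT x:{t i<..t (Suc i)}|lborel. (f x - f (t (Suc i))) * Q x)
      + (\<Sum>i<Suc p. f (t (Suc i)) * (P (Suc i) - P i))"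
    unfolding n[symmetric] sum.distrib[symmetric] using split_cell by (rule sum.cong[OF refl]) simp
  also have "(\<Sum>i<Suc p. f (t (Suc i)) * (P (Suc i) - P i))
      = f (t (Suc p)) * P (Suc p) - f (t (Suc 0)) * P 0 - (\<Sum>i<p. P (Suc i) * (f (t (Suc (Suc i))) - f (t (Suc i))))"
    by (rule sum_by_parts)
  finally show ?thesis
    using set_integral_lborel_singleton[of 0 Q] n by (simp add: P_def t_def)
qed

lemma set_integral_cells_oscillation_le:
  fixes f Q v :: "real \<Rightarrow> real"
  assumes n: "0 < n" and K: "0 < K"
    and Q: "set_integrable lborel {0..1} Q" and Q2: "set_integrable lborel {0..1} (\<lambda>x. (Q x)\<^sup>2)"
    and Q2_le: "(LINT x:{0..1}|lborel. (Q x)\<^sup>2) \<le> K * real n"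
    and fQ: "set_integrable lborel {0..1} (\<lambda>x. f x * Q x)"
    and v: "\<And>x y. 0 \<le> x \<Longrightarrow> x \<le> y \<Longrightarrow> y \<le> 1 \<Longrightarrow> v x + \<bar>f y - f x\<bar> \<le> v y"
  defines "t \<equiv> \<lambda>i. real i / real n"
  shows "\<bar>\<Sum>i<n. LINT x:{t i<..t (Suc i)}|lborel. (f x - f (t (Suc i))) * Q x\<bar> \<le> (v 1 - v 0) * sqrt K"
proof -
  have t: "0 \<le> t i" "t i \<le> t (Suc i)" "i < n \<Longrightarrow> t (Suc i) \<le> 1" for i
    by (simp_all add: t_def divide_right_mono)
  have "\<bar>\<Sum>i<n. LINT x:{t i<..t (Suc i)}|lborel. (f x - f (t (Suc i))) * Q x\<bar>
      \<le> (\<Sum>i<n. (v (t (Suc i)) - v (t i)) * sqrt K)"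
  proof (rule order_trans[OF sum_abs sum_mono])
    fix i assume "i \<in> {..<n}"
    then have i: "i < n" by simp
    have integrable: "set_integrable lborel {t i<..t (Suc i)} (\<lambda>x. (f x - f (t (Suc i))) * Q x)"
      using cell_subset_unit_interval[OF i] unfolding left_diff_distrib t_def
      by (intro set_integral_diff(1) set_integrable_mult_right)
        (auto intro: set_integrable_subset[OF fQ] set_integrable_subset[OF Q])
    have w: "0 \<le> v (t (Suc i)) - v (t i)"
      using v[of "t i" "t (Suc i)"] t i by simp
    have dom: "\<bar>(f x - f (t (Suc i))) * Q x\<bar> \<le> (v (t (Suc i)) - v (t i)) * \<bar>Q x\<bar>"
      if x: "x \<in> {t i<..t (Suc i)}" for x
    proof -
      have "0 \<le> x" "t i \<le> x" "x \<le> t (Suc i)" "t (Suc i) \<le> 1"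
        using x t(1)[of i] t(3)[OF i] by auto
      then have "v (t i) \<le> v x" "v x + \<bar>f (t (Suc i)) - f x\<bar> \<le> v (t (Suc i))"
        using v[of "t i" x] v[of x "t (Suc i)"] t(1) by auto
      then show ?thesis
        unfolding abs_mult by (intro mult_right_mono) auto
    qed
    show "\<bar>LINT x:{t i<..t (Suc i)}|lborel. (f x - f (t (Suc i))) * Q x\<bar> \<le> (v (t (Suc i)) - v (t i)) * sqrt K"
      using set_integral_cell_abs_le[OF Q2 Q2_le K i integrable[unfolded t_def] dom[unfolded t_def] w[unfolded t_def]]
      unfolding t_def .
  qed
  also have "\<dots> = (v 1 - v 0) * sqrt K"
    using sum_lessThan_telescope[of "\<lambda>i. v (t i)" n] n by (simp add: t_def sum_distrib_right[symmetric])
  finally show ?thesis .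
qed

lemma set_integral_mult_bounded_variation_le:
  fixes f Q v :: "real \<Rightarrow> real"
  assumes n: "2 \<le> n" and K: "0 < K"
    and Q: "set_integrable lborel {0..1} Q" and Q2: "set_integrable lborel {0..1} (\<lambda>x. (Q x)\<^sup>2)"
    and Q2_le: "(LINT x:{0..1}|lborel. (Q x)\<^sup>2) \<le> K * real n"
    and fQ: "set_integrable lborel {0..1} (\<lambda>x. f x * Q x)"
    and P_le: "\<And>i. 1 \<le> i \<Longrightarrow> i < n \<Longrightarrow> \<bar>LINT x:{0..real i / real n}|lborel. Q x\<bar> \<le> B"
    and v: "\<And>x y. 0 \<le> x \<Longrightarrow> x \<le> y \<Longrightarrow> y \<le> 1 \<Longrightarrow> v x + \<bar>f y - f x\<bar> \<le> v y"
  shows "\<bar>LINT x:{0..1}|lborel. f x * Q x\<bar> \<le> (B + sqrt K) * (\<bar>f 1\<bar> + v 1 - v 0)"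
proof -
  obtain p where p: "n = Suc p" "1 \<le> p"
    using n by (cases n) auto
  define t where "t i = real i / real n" for i
  define P where "P m = (LINT x:{0..real m / real n}|lborel. Q x)" for m
  have t: "0 \<le> t i" "t i \<le> t (Suc i)" "i < n \<Longrightarrow> t (Suc i) \<le> 1" for i
    by (simp_all add: t_def divide_right_mono)
  have B: "0 \<le> B"
    using P_le[of 1] n by linarith
  have "\<bar>P n\<bar> \<le> B + sqrt K"
  proof -
    \<comment> \<open>B only controls P i for i < n, so the last cell is added by hand.\<close>
    have "P n = P p + (LINT x:{real p / real n<..real (Suc p) / real n}|lborel. Q x)"
      using set_integral_cell[OF Q, of p n] p unfolding P_def by simp
    moreover have "\<bar>LINT x:{real p / real n<..real (Suc p) / real n}|lborel. Q x\<bar> \<le> 1 * sqrt K"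
      using p cell_subset_unit_interval[of p n]
      by (intro set_integral_cell_abs_le[OF Q2 Q2_le K]) (auto intro: set_integrable_subset[OF Q])
    ultimately show ?thesis
      using P_le[of p] p unfolding P_def by simp
  qed
  then have boundary: "\<bar>f 1 * P n\<bar> \<le> \<bar>f 1\<bar> * (B + sqrt K)"
    by (simp add: abs_mult mult_left_mono)
  have "\<bar>\<Sum>i<p. P (Suc i) * (f (t (Suc (Suc i))) - f (t (Suc i)))\<bar>
      \<le> (\<Sum>i<p. B * (v (t (Suc (Suc i))) - v (t (Suc i))))"
  proof (rule order_trans[OF sum_abs sum_mono])
    fix i assume "i \<in> {..<p}"
    then have "\<bar>P (Suc i)\<bar> \<le> B" "\<bar>f (t (Suc (Suc i))) - f (t (Suc i))\<bar> \<le> v (t (Suc (Suc i))) - v (t (Suc i))"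
      using P_le[of "Suc i"] v[of "t (Suc i)" "t (Suc (Suc i))"] t[of "Suc i"] p unfolding P_def by auto
    then show "\<bar>P (Suc i) * (f (t (Suc (Suc i))) - f (t (Suc i)))\<bar> \<le> B * (v (t (Suc (Suc i))) - v (t (Suc i)))"
      unfolding abs_mult using B by (intro mult_mono) auto
  qed
  also have "\<dots> = B * (v (t (Suc p)) - v (t 1))"
    using sum_lessThan_telescope[of "\<lambda>i. v (t (Suc i))" p] by (simp add: sum_distrib_left[symmetric])
  also have "\<dots> \<le> B * (v 1 - v 0)"
    using B v[of 0 "t 1"] t[of 0] p by (intro mult_left_mono) (auto simp: t_def)
  finally have variation: "\<bar>\<Sum>i<p. P (Suc i) * (f (t (Suc (Suc i))) - f (t (Suc i)))\<bar> \<le> B * (v 1 - v 0)" .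
  have "(LINT x:{0..1}|lborel. f x * Q x)
      = (\<Sum>i<n. LINT x:{t i<..t (Suc i)}|lborel. (f x - f (t (Suc i))) * Q x)
        + f 1 * P n - (\<Sum>i<p. P (Suc i) * (f (t (Suc (Suc i))) - f (t (Suc i))))"
    using set_integral_mult_by_parts[OF Q fQ p(1)] unfolding t_def P_def .
  with set_integral_cells_oscillation_le[OF _ K Q Q2 Q2_le fQ v] boundary variation n
  show ?thesis
    unfolding t_def by (simp add: algebra_simps)
qed

lemma ONS01_measurable:
  assumes "ONS01 \<phi>" "1 \<le> k"
  shows "\<phi> k \<in> borel_measurable lborel"
  using assms unfolding ONS01_def by simp

lemma ONS01_set_integrable_square:
  assumes "ONS01 \<phi>" "1 \<le> k"
  shows "set_integrable lborel {0..1} (\<lambda>x. (\<phi> k x)\<^sup>2)"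
  using assms unfolding ONS01_def by simp

lemma ONS01_integral_mult:
  assumes "ONS01 \<phi>" "1 \<le> j" "1 \<le> k"
  shows "(LINT x:{0..1}|lborel. \<phi> j x * \<phi> k x) = (if j = k then 1 else 0)"
  using assms unfolding ONS01_def by simp

lemma ONS01_set_integrable:
  assumes "ONS01 \<phi>" "1 \<le> k"
  shows "set_integrable lborel {0..1} (\<phi> k)"
  by (rule set_integrable_of_square[OF _ _ ONS01_measurable[OF assms]
        ONS01_set_integrable_square[OF assms]]) auto

lemma ONS01_set_integrable_mult:
  assumes "ONS01 \<phi>" "1 \<le> j" "1 \<le> k"
  shows "set_integrable lborel {0..1} (\<lambda>x. \<phi> j x * \<phi> k x)"
  by (rule set_integrable_mult_of_squares[OF _
        ONS01_measurable[OF assms(1,2)] ONS01_measurable[OF assms(1,3)]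
        ONS01_set_integrable_square[OF assms(1,2)] ONS01_set_integrable_square[OF assms(1,3)]]) auto

lemma ONS01_integral_square_sum:
  assumes "ONS01 \<phi>" "finite I" "\<And>k. k \<in> I \<Longrightarrow> 1 \<le> k"
  shows "set_integrable lborel {0..1} (\<lambda>x. (\<Sum>k\<in>I. c k * \<phi> k x)\<^sup>2)"
    and "(LINT x:{0..1}|lborel. (\<Sum>k\<in>I. c k * \<phi> k x)\<^sup>2) = (\<Sum>k\<in>I. (c k)\<^sup>2)"
proof -
  have square: "(\<Sum>k\<in>I. c k * \<phi> k x)\<^sup>2 = (\<Sum>j\<in>I. \<Sum>k\<in>I. c j * c k * (\<phi> j x * \<phi> k x))" for x
    unfolding power2_eq_square sum_product by (intro sum.cong refl) (simp add: mult_ac)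
  have integrable: "set_integrable lborel {0..1} (\<lambda>x. c j * c k * (\<phi> j x * \<phi> k x))"
    if "j \<in> I" "k \<in> I" for j k
    using ONS01_set_integrable_mult[OF assms(1) assms(3)[OF that(1)] assms(3)[OF that(2)]]
    by (rule set_integrable_mult_right)
  have inner: "set_integrable lborel {0..1} (\<lambda>x. \<Sum>k\<in>I. c j * c k * (\<phi> j x * \<phi> k x))"
    if "j \<in> I" for j
    by (rule set_integrable_sum) (rule integrable[OF that])
  show "set_integrable lborel {0..1} (\<lambda>x. (\<Sum>k\<in>I. c k * \<phi> k x)\<^sup>2)"
    unfolding square by (rule set_integrable_sum) (rule inner)
  have "(LINT x:{0..1}|lborel. (\<Sum>k\<in>I. c k * \<phi> k x)\<^sup>2)
      = (\<Sum>j\<in>I. LINT x:{0..1}|lborel. (\<Sum>k\<in>I. c j * c k * (\<phi> j x * \<phi> k x)))"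
    unfolding square using inner by (rule set_integrable_sum(2))
  also have "\<dots> = (\<Sum>j\<in>I. \<Sum>k\<in>I. c j * c k * (LINT x:{0..1}|lborel. \<phi> j x * \<phi> k x))"
  proof (rule sum.cong[OF refl])
    fix j assume "j \<in> I"
    then show "(LINT x:{0..1}|lborel. (\<Sum>k\<in>I. c j * c k * (\<phi> j x * \<phi> k x)))
        = (\<Sum>k\<in>I. c j * c k * (LINT x:{0..1}|lborel. \<phi> j x * \<phi> k x))"
      by (subst set_integrable_sum(2)) (auto intro: integrable)
  qed
  also have "\<dots> = (\<Sum>j\<in>I. \<Sum>k\<in>I. if k = j then c j * c j else 0)"
    using ONS01_integral_mult[OF assms(1)] assms(3) by (intro sum.cong refl) auto
  also have "\<dots> = (\<Sum>k\<in>I. (c k)\<^sup>2)"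
    using assms(2) by (simp add: power2_eq_square)
  finally show "(LINT x:{0..1}|lborel. (\<Sum>k\<in>I. c k * \<phi> k x)\<^sup>2) = (\<Sum>k\<in>I. (c k)\<^sup>2)" .
qed

section \<open>Growth of the coefficients\<close>

lemma bigo_imp_uniform_bound:
  fixes f g :: "nat \<Rightarrow> real"
  assumes "f \<in> O(g)" "\<And>k. 1 \<le> k \<Longrightarrow> 0 < g k"
  obtains C where "\<And>k. 1 \<le> k \<Longrightarrow> \<bar>f k\<bar> \<le> C * g k"
proof -
  obtain c where "eventually (\<lambda>k. norm (f k) \<le> c * norm (g k)) at_top"
    using assms(1) by (rule landau_o.bigE)
  then obtain N where c: "\<And>k. N \<le> k \<Longrightarrow> \<bar>f k\<bar> \<le> c * \<bar>g k\<bar>"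
    unfolding eventually_at_top_linorder by auto
  define C where "C = max c (Max ((\<lambda>k. \<bar>f k\<bar> / g k) ` {1..N}))"
  have "\<bar>f k\<bar> \<le> C * g k" if k: "1 \<le> k" for k
  proof (cases "k \<le> N")
    case True
    have "\<bar>f k\<bar> / g k \<le> C"
      unfolding C_def using True k by (intro max.coboundedI2 Max_ge) auto
    then show ?thesis
      using assms(2)[OF k] by (simp add: divide_le_eq)
  next
    case False
    then have "\<bar>f k\<bar> \<le> c * g k"
      using c[of k] assms(2)[OF k] by simp
    also have "\<dots> \<le> C * g k"
      unfolding C_def using assms(2)[OF k] by (intro mult_right_mono) auto
    finally show ?thesis .
  qed
  then show ?thesis using that by blast
qed

lemma mult_ln_bigo_sqrt:
  fixes d :: "nat \<Rightarrow> real"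
  assumes "d \<in> O(\<lambda>n. sqrt (real n) / (ln (real n + 1))\<^sup>2)"
  shows "(\<lambda>n. d n * ln (real n)) \<in> O(\<lambda>n. sqrt (real n))"
proof -
  have "(\<lambda>n. ln (real n)) \<in> O(\<lambda>n. (ln (real n + 1))\<^sup>2)"
    by real_asymp
  with assms have "(\<lambda>n. d n * ln (real n))
      \<in> O(\<lambda>n. sqrt (real n) / (ln (real n + 1))\<^sup>2 * (ln (real n + 1))\<^sup>2)"
    by (rule landau_o.big.mult)
  moreover have "eventually (\<lambda>n. sqrt (real n) / (ln (real n + 1))\<^sup>2 * (ln (real n + 1))\<^sup>2
      = sqrt (real n)) at_top"
    using eventually_gt_at_top[of 0] by eventually_elim simp
  ultimately show ?thesis
    using landau_o.big.cong by auto
qed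

lemma sum_coefficients_square_le:
  fixes d a :: "nat \<Rightarrow> real"
  assumes "d \<in> O(\<lambda>n. sqrt (real n) / (ln (real n + 1))\<^sup>2)" "a \<in> ell2"
  obtains K where "0 < K" "\<And>n. (\<Sum>k=1..n. (d k * a k * ln (real k))\<^sup>2) \<le> K * real n"
proof -
  obtain C where C: "\<And>k. 1 \<le> k \<Longrightarrow> \<bar>d k * ln (real k)\<bar> \<le> C * sqrt (real k)"
    using bigo_imp_uniform_bound[OF mult_ln_bigo_sqrt[OF assms(1)]] by force
  have summable: "summable (\<lambda>k. (a k)\<^sup>2)"
    using assms(2) by (simp add: ell2_def)
  define K where "K = C\<^sup>2 * (\<Sum>k. (a k)\<^sup>2) + 1"
  have "(\<Sum>k=1..n. (d k * a k * ln (real k))\<^sup>2) \<le> K * real n" for n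
  proof -
    have "(d k * a k * ln (real k))\<^sup>2 \<le> C\<^sup>2 * real n * (a k)\<^sup>2" if k: "k \<in> {1..n}" for k
    proof -
      have "(d k * ln (real k))\<^sup>2 \<le> (C * sqrt (real k))\<^sup>2"
        using power_mono[OF C abs_ge_zero, of k 2] k by simp
      also have "\<dots> \<le> C\<^sup>2 * real n"
        using k by (simp add: power_mult_distrib mult_left_mono)
      finally have "(d k * ln (real k))\<^sup>2 * (a k)\<^sup>2 \<le> C\<^sup>2 * real n * (a k)\<^sup>2"
        by (rule mult_right_mono) simp
      then show ?thesis
        by (simp add: power_mult_distrib mult_ac)
    qed
    then have "(\<Sum>k=1..n. (d k * a k * ln (real k))\<^sup>2) \<le> C\<^sup>2 * real n * (\<Sum>k=1..n. (a k)\<^sup>2)"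
      unfolding sum_distrib_left by (rule sum_mono)
    also have "\<dots> \<le> C\<^sup>2 * real n * (\<Sum>k. (a k)\<^sup>2)"
      using summable by (intro mult_left_mono sum_le_suminf) auto
    also have "\<dots> \<le> K * real n"
      unfolding K_def by (simp add: algebra_simps)
    finally show ?thesis .
  qed
  moreover have "0 < K"
    unfolding K_def using summable by (simp add: add_nonneg_pos suminf_nonneg)
  ultimately show ?thesis using that by blast
qed

lemma Qfun_set_integrable:
  assumes "ONS01 \<phi>"
  shows "set_integrable lborel {0..1} (Qfun \<phi> d a n)"
proof -
  have "set_integrable lborel {0..1} (\<lambda>x. \<Sum>k\<in>{1..n}. d k * a k * ln (real k) * \<phi> k x)"
    using ONS01_set_integrable[OF assms] by (intro set_integrable_sum(1)) auto
  then show ?thesis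
    by (simp add: Qfun_def[abs_def])
qed

lemma Qfun_integral_square:
  assumes "ONS01 \<phi>"
  shows "set_integrable lborel {0..1} (\<lambda>x. (Qfun \<phi> d a n x)\<^sup>2)"
    and "(LINT x:{0..1}|lborel. (Qfun \<phi> d a n x)\<^sup>2) = (\<Sum>k=1..n. (d k * a k * ln (real k))\<^sup>2)"
  using ONS01_integral_square_sum[OF assms, of "{1..n}" "\<lambda>k. d k * a k * ln (real k)"]
  unfolding Qfun_def by auto

lemma abs_integral_Qfun_le_Bfun:
  assumes "1 \<le> i" "i < n"
  shows "\<bar>LINT x:{0..real i / real n}|lborel. Qfun \<phi> d a n x\<bar> \<le> Bfun \<phi> d a n"
  using assms unfolding Bfun_def by (auto intro: Max_ge)

lemma Ufun_abs_le:
  assumes \<phi>: "ONS01 \<phi>" and f: "BV01 f" and n: "2 \<le> n" and K: "0 < K"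
    and coefficients: "(\<Sum>k=1..n. (d k * a k * ln (real k))\<^sup>2) \<le> K * real n"
    and B: "Bfun \<phi> d a n \<le> B"
  shows "\<bar>Ufun \<phi> d a n f\<bar> \<le> (B + sqrt K) * (\<bar>f 1\<bar> + variation f 1 - variation f 0)"
proof (cases "set_integrable lborel {0..1} (\<lambda>x. f x * Qfun \<phi> d a n x)")
  case True
  show ?thesis
    unfolding Ufun_def
  proof (rule set_integral_mult_bounded_variation_le[OF n K Qfun_set_integrable[OF \<phi>]
        Qfun_integral_square(1)[OF \<phi>] _ True])
    show "(LINT x:{0..1}|lborel. (Qfun \<phi> d a n x)\<^sup>2) \<le> K * real n"
      using coefficients by (simp add: Qfun_integral_square(2)[OF \<phi>])
    show "\<bar>LINT x:{0..real i / real n}|lborel. Qfun \<phi> d a n x\<bar> \<le> B" if "1 \<le> i" "i < n" for i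
      using abs_integral_Qfun_le_Bfun[OF that, of \<phi> d a] B by linarith
    show "variation f x + \<bar>f y - f x\<bar> \<le> variation f y" if "0 \<le> x" "x \<le> y" "y \<le> 1" for x y
      using variation_add_jump_le[OF f that] .
  qed
next
  case False
  \<comment> \<open>possible since f need not be measurable; then Ufun is 0 by convention\<close>
  then have "Ufun \<phi> d a n f = 0"
    unfolding Ufun_def set_lebesgue_integral_def set_integrable_def
    by (simp add: not_integrable_integral_eq)
  moreover have "0 \<le> B"
    using abs_integral_Qfun_le_Bfun[of 1 n \<phi> d a] B n by linarith
  moreover have "0 \<le> variation f 1 - variation f 0"
    using variation_add_jump_le[OF f, of 0 1] by simp
  ultimately show ?thesis
    using K by simp
qed

theorem theorem1:
  fixes \<phi> :: "nat \<Rightarrow> real \<Rightarrow> real" and d :: "nat \<Rightarrow> real"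
  assumes "ONS01 \<phi>"
    and "d \<in> O(\<lambda>n. sqrt (real n) / (ln (real n + 1))\<^sup>2)"
    and "\<forall>a\<in>ell2. (\<lambda>n. Bfun \<phi> d a n) \<in> O(\<lambda>_. 1)"
  shows "\<forall>f a. BV01 f \<and> a \<in> ell2 \<longrightarrow>
           limsup (\<lambda>n. ereal \<bar>Ufun \<phi> d a n f\<bar>) < \<infinity>"
proof (intro allI impI)
  fix f a assume "BV01 f \<and> a \<in> ell2"
  then have f: "BV01 f" and a: "a \<in> ell2" by auto
  obtain K where K: "0 < K" "\<And>n. (\<Sum>k=1..n. (d k * a k * ln (real k))\<^sup>2) \<le> K * real n"
    using sum_coefficients_square_le[OF assms(2) a] by blast
  have "(\<lambda>n. Bfun \<phi> d a n) \<in> O(\<lambda>_. 1)"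
    using assms(3) a by blast
  then obtain B where "eventually (\<lambda>n. norm (Bfun \<phi> d a n) \<le> B * norm (1::real)) at_top"
    by (rule landau_o.bigE)
  then obtain N where B: "\<And>n. N \<le> n \<Longrightarrow> Bfun \<phi> d a n \<le> B"
    unfolding eventually_at_top_linorder by (auto dest: abs_le_D1)
  have "eventually (\<lambda>n. ereal \<bar>Ufun \<phi> d a n f\<bar>
      \<le> ereal ((B + sqrt K) * (\<bar>f 1\<bar> + variation f 1 - variation f 0))) sequentially"
    unfolding eventually_at_top_linorder
    using Ufun_abs_le[OF assms(1) f _ K(1) K(2) B] by (intro exI[of _ "max 2 N"]) auto
  then have "limsup (\<lambda>n. ereal \<bar>Ufun \<phi> d a n f\<bar>)
      \<le> ereal ((B + sqrt K) * (\<bar>f 1\<bar> + variation f 1 - variation f 0))"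
    by (rule Limsup_bounded)
  then show "limsup (\<lambda>n. ereal \<bar>Ufun \<phi> d a n f\<bar>) < \<infinity>"
    by (rule order.strict_trans1) simp
qed

end
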